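(* Let $n,m\in\mathbb{N}$ with $n\geq 3$ and $1\le m\leq \frac{n}{2}$. Then the Johnson graph $J(n,m)$ is panconnected.
   Context: For $n,m\in\mathbb{N}$ with $m<n$, the Johnson graph $J(n,m)$ is the simple graph whose vertex set is the set of all $m$-element subsets of $[n]=\{1,\dots,n\}$, two vertices $v,w$ being adjacent if and only if $|v\cap w|=m-1$. A graph $G$ of order $N>2$ is panconnected if for every two distinct vertices $u,v$ and every integer $l$ with $d(u,v)\le l\le N-1$ there is a $u$-$v$ path of length $l$ in $G$ (here $d$ is the graph distance and the length of a path is its number of edges). *)

theory Defs
  imports Main "HOL-Library.Extended_Nat"
begin

(* A simple graph is given by a vertex set V and an adjacency relation E
   (assumed symmetric and irreflexive where it matters; the Johnson graph's is). *)

definition is_path :: "'a set \<Rightarrow> ('a \<Rightarrow> 'a \<Rightarrow> bool) \<Rightarrow> 'a \<Rightarrow> 'a \<Rightarrow> 'a list \<Rightarrow> bool" where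
  "is_path V E u v p \<longleftrightarrow>
     p \<noteq> [] \<and> hd p = u \<and> last p = v \<and> set p \<subseteq> V \<and> distinct p \<and>
     (\<forall>i. Suc i < length p \<longrightarrow> E (p ! i) (p ! Suc i))"

(* graph distance (infinite if no path exists) *)
definition graph_dist :: "'a set \<Rightarrow> ('a \<Rightarrow> 'a \<Rightarrow> bool) \<Rightarrow> 'a \<Rightarrow> 'a \<Rightarrow> enat" where
  "graph_dist V E u v = (INF p \<in> {p. is_path V E u v p}. enat (length p - 1))"

definition panconnected :: "'a set \<Rightarrow> ('a \<Rightarrow> 'a \<Rightarrow> bool) \<Rightarrow> bool" where
  "panconnected V E \<longleftrightarrow> finite V \<and> card V > 2 \<and>
     (\<forall>u\<in>V. \<forall>v\<in>V. u \<noteq> v \<longrightarrow>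
        (\<forall>l::nat. graph_dist V E u v \<le> enat l \<and> l \<le> card V - 1 \<longrightarrow>
           (\<exists>p. is_path V E u v p \<and> length p - 1 = l)))"

definition johnson_vertices :: "nat \<Rightarrow> nat \<Rightarrow> nat set set" where
  "johnson_vertices n m = {A. A \<subseteq> {1..n} \<and> card A = m}"

definition johnson_adj :: "nat \<Rightarrow> nat set \<Rightarrow> nat set \<Rightarrow> bool" where
  "johnson_adj m A B \<longleftrightarrow> card (A \<inter> B) = m - 1"

end

(*
  For a finite ground set S, call J(S,m) the graph of m-subsets of S adjacent when they share
  m - 1 elements; the distance of u and v in it is at least |u - v|. The theorem follows from a
  stronger statement proved by induction on S: in every J(S,m), two distinct vertices u, v are
  joined by paths of every length l with |u - v| <= l < |J(S,m)|.

  For the induction step pick z in v - u and write S = S' + z. The vertices avoiding z form a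
  copy of J(S',m+1), those containing z a copy of J(S',m) via A |-> insert z A, so
  |J(S,m+1)| = |J(S',m+1)| + |J(S',m)|. A path of length l is a path of length a inside the first
  layer from u to a neighbour insert e (v - {z}) of v, followed by an edge into the second layer
  and a path of length l - 1 - a inside it ending at v; a is chosen such that both pieces have
  lengths the induction hypothesis provides.

  The hypothesis 2m <= n only ensures 0 < m < n, whence J(n,m) has at least n >= 3 vertices.
*)
theory Submission
  imports Defs Complex_Main
begin

lemma is_path_iff_successively:
  "is_path V E u v p \<longleftrightarrow>
     p \<noteq> [] \<and> hd p = u \<and> last p = v \<and> set p \<subseteq> V \<and> distinct p \<and> successively E p"
  unfolding is_path_def successively_conv_nth by blast

lemma is_path_singleton: "u \<in> V \<Longrightarrow> is_path V E u u [u]"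
  unfolding is_path_iff_successively by auto

lemma is_path_mono: "is_path V E u v p \<Longrightarrow> V \<subseteq> W \<Longrightarrow> is_path W E u v p"
  unfolding is_path_iff_successively by blast

lemma is_path_append:
  assumes "is_path V E u w p" "is_path V E x v q" "E w x" "set p \<inter> set q = {}"
  shows "is_path V E u v (p @ q)"
  using assms unfolding is_path_iff_successively by (auto simp: successively_append_iff)

definition johnson_vertices_on :: "'a set \<Rightarrow> nat \<Rightarrow> 'a set set" where
  "johnson_vertices_on S m = {A. A \<subseteq> S \<and> card A = m}"

lemma johnson_vertices_eq: "johnson_vertices n m = johnson_vertices_on {1..n} m"
  unfolding johnson_vertices_def johnson_vertices_on_def ..

lemma johnson_vertices_on_mono: "S \<subseteq> T \<Longrightarrow> johnson_vertices_on S m \<subseteq> johnson_vertices_on T m"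
  unfolding johnson_vertices_on_def by blast

lemma finite_johnson_vertices_on: "finite S \<Longrightarrow> finite (johnson_vertices_on S m)"
  unfolding johnson_vertices_on_def by (rule finite_subset[of _ "Pow S"]) auto

lemma card_johnson_vertices_on: "finite S \<Longrightarrow> card (johnson_vertices_on S m) = card S choose m"
  unfolding johnson_vertices_on_def by (rule n_subsets)

lemma card_johnson_vertices_on_insert:
  assumes "finite S" "z \<notin> S"
  shows "card (johnson_vertices_on (insert z S) (Suc m)) =
           card (johnson_vertices_on S (Suc m)) + card (johnson_vertices_on S m)"
  using assms by (simp add: card_johnson_vertices_on)

lemma johnson_vertices_onD:
  assumes "finite S" "A \<in> johnson_vertices_on S m"
  shows "finite A" "A \<subseteq> S" "card A = m"
  using assms unfolding johnson_vertices_on_def by (auto intro: finite_subset)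

lemma insert_in_johnson_vertices_on:
  assumes "finite S" "v \<in> johnson_vertices_on S m" "e \<in> S" "e \<notin> v"
  shows "insert e v \<in> johnson_vertices_on S (Suc m)"
  using assms johnson_vertices_onD[OF assms(1,2)] by (simp add: johnson_vertices_on_def)

lemma obtain_not_in_if_card_eq:
  assumes "finite A" "card B = card A" "B \<noteq> A"
  obtains b where "b \<in> B" "b \<notin> A"
  using assms card_subset_eq by (metis subsetI)

lemma obtain_not_in_if_one_less_card_johnson_vertices_on:
  assumes "finite S" "u \<in> johnson_vertices_on S m" "1 < card (johnson_vertices_on S m)"
  obtains d where "d \<in> S" "d \<notin> u"
proof -
  have "\<not> johnson_vertices_on S m \<subseteq> {u}"
    using assms(3) card_mono[of "{u}" "johnson_vertices_on S m"] by auto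
  then obtain y where y: "y \<in> johnson_vertices_on S m" "y \<noteq> u"
    by blast
  with assms(1,2) show thesis
    by (metis johnson_vertices_onD obtain_not_in_if_card_eq subsetD that)
qed

lemma card_Diff_le_one_if_johnson_adj:
  assumes "finite A" "card A = m" "johnson_adj m A B"
  shows "card (A - B) \<le> 1"
  using assms by (simp add: johnson_adj_def card_Diff_subset_Int)

lemma card_Diff_triangle:
  assumes "finite A" "finite B"
  shows "card (A - C) \<le> card (A - B) + card (B - C)"
proof -
  have "card (A - C) \<le> card ((A - B) \<union> (B \<inter> A - C))"
    using assms by (intro card_mono) auto
  also have "\<dots> \<le> card (A - B) + card (B \<inter> A - C)"
    by (rule card_Un_le)
  also have "card (B \<inter> A - C) \<le> card (B - C)"
    using assms by (intro card_mono) auto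
  finally show ?thesis by simp
qed

lemma card_Diff_hd_last_le:
  assumes "\<forall>A\<in>set p. finite A" "successively (\<lambda>A B. card (A - B) \<le> 1) p" "p \<noteq> []"
  shows "card (hd p - last p) \<le> length p - 1"
  using assms
proof (induction p rule: induct_list012)
  case (3 A B p)
  have "card (A - last (B # p)) \<le> card (A - B) + card (B - last (B # p))"
    using "3.prems"(1) by (intro card_Diff_triangle) auto
  also have "\<dots> \<le> 1 + (length (B # p) - 1)"
    using "3.prems" "3.IH"(2) by (intro add_mono) auto
  finally show ?case by simp
qed auto

lemma card_Diff_le_path_length:
  assumes "finite S" "is_path (johnson_vertices_on S m) (johnson_adj m) u v p"
  shows "card (u - v) \<le> length p - 1"
proof -
  have path: "p \<noteq> []" "hd p = u" "last p = v" "set p \<subseteq> johnson_vertices_on S m"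
    "successively (johnson_adj m) p"
    using assms(2) unfolding is_path_iff_successively by auto
  have vertices: "finite A" "card A = m" if "A \<in> set p" for A
    using path(4) that johnson_vertices_onD[OF assms(1)] by auto
  have "successively (\<lambda>A B. card (A - B) \<le> 1) p"
    using path(5) by (rule successively_mono) (use vertices card_Diff_le_one_if_johnson_adj in blast)
  with vertices path(1) have "card (hd p - last p) \<le> length p - 1"
    by (intro card_Diff_hd_last_le) auto
  with path(2,3) show ?thesis by simp
qed

lemma card_Diff_le_graph_dist:
  assumes "finite S"
  shows "enat (card (u - v)) \<le> graph_dist (johnson_vertices_on S m) (johnson_adj m) u v"
  unfolding graph_dist_def
  using card_Diff_le_path_length[OF assms] by (auto intro!: INF_greatest)

lemma card_Diff_less_card_johnson_vertices_on:
  assumes "finite S" "u \<in> johnson_vertices_on S m" "w \<in> johnson_vertices_on S m" "u \<noteq> w"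
  shows "card (u - w) < card (johnson_vertices_on S m)"
proof -
  note u = johnson_vertices_onD[OF assms(1,2)] and w = johnson_vertices_onD[OF assms(1,3)]
  obtain b where b: "b \<in> w" "b \<notin> u"
    using obtain_not_in_if_card_eq[OF u(1)] u(3) w(3) assms(4) by metis
  define swap where "swap a = insert b (u - {a})" for a
  have "swap a \<in> johnson_vertices_on S m" if "a \<in> u" for a
  proof -
    have "card (u - {a}) = m - 1" "m \<noteq> 0"
      using u that by (auto simp: card_gt_0_iff)
    then show ?thesis
      using u w b that by (auto simp: swap_def johnson_vertices_on_def)
  qed
  then have "swap ` (u - w) \<subseteq> johnson_vertices_on S m"
    by blast
  moreover have "u \<notin> swap ` (u - w)"
    using b by (auto simp: swap_def)
  ultimately have "card (insert u (swap ` (u - w))) \<le> card (johnson_vertices_on S m)"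
    using assms(1,2) by (intro card_mono finite_johnson_vertices_on) auto
  moreover have "inj_on swap (u - w)"
    using b by (auto simp: swap_def inj_on_def)
  ultimately show ?thesis
    using \<open>u \<notin> swap ` (u - w)\<close> u by (simp add: card_image)
qed

lemma is_path_map_insert:
  assumes "is_path (johnson_vertices_on S m) (johnson_adj m) x v q" "finite S" "z \<notin> S"
  shows "is_path (johnson_vertices_on (insert z S) (Suc m)) (johnson_adj (Suc m))
           (insert z x) (insert z v) (map (insert z) q)"
proof -
  have path: "q \<noteq> []" "hd q = x" "last q = v" "set q \<subseteq> johnson_vertices_on S m" "distinct q"
    "\<And>i. Suc i < length q \<Longrightarrow> johnson_adj m (q ! i) (q ! Suc i)"
    using assms(1) unfolding is_path_def by auto
  have vertices: "finite A" "A \<subseteq> S" "card A = m" "z \<notin> A" if "A \<in> set q" for A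
    using that path(4) johnson_vertices_onD[OF assms(2)] assms(3) by blast+
  have "inj_on (insert z) (set q)"
  proof (rule inj_onI)
    fix A B assume "A \<in> set q" "B \<in> set q" "insert z A = insert z B"
    then show "A = B"
      using vertices(4) by (metis Diff_insert_absorb)
  qed
  moreover have "insert z A \<in> johnson_vertices_on (insert z S) (Suc m)" if "A \<in> set q" for A
    using vertices[OF that] by (auto simp: johnson_vertices_on_def)
  moreover have "johnson_adj (Suc m) (insert z (q ! i)) (insert z (q ! Suc i))"
    if i: "Suc i < length q" for i
  proof -
    have in_q: "q ! i \<in> set q" "q ! Suc i \<in> set q"
      using i by auto
    have "q ! i \<noteq> q ! Suc i"
      using path(5) i by (simp add: nth_eq_iff_index_eq)
    then have "m \<noteq> 0"
      using vertices in_q by (metis card_0_eq)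
    moreover have "card (q ! i \<inter> q ! Suc i) = m - 1"
      using path(6)[OF i] by (simp add: johnson_adj_def)
    moreover have "insert z (q ! i) \<inter> insert z (q ! Suc i) = insert z (q ! i \<inter> q ! Suc i)"
      by auto
    ultimately show ?thesis
      using vertices in_q by (simp add: johnson_adj_def)
  qed
  ultimately show ?thesis
    using path unfolding is_path_def by (auto simp: hd_map last_map distinct_map)
qed

text \<open>Panconnectedness with the distance replaced by its lower bound \<^term>\<open>card (u - v)\<close> and
  without the requirement of more than two vertices, so that it holds for every finite ground set.\<close>

definition johnson_panconnected_on :: "nat set \<Rightarrow> nat \<Rightarrow> bool" where
  "johnson_panconnected_on S m \<longleftrightarrow>
     (\<forall>u\<in>johnson_vertices_on S m. \<forall>v\<in>johnson_vertices_on S m. \<forall>l.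
        u \<noteq> v \<and> card (u - v) \<le> l \<and> l < card (johnson_vertices_on S m) \<longrightarrow>
        (\<exists>p. is_path (johnson_vertices_on S m) (johnson_adj m) u v p \<and> length p = Suc l))"

lemma johnson_panconnected_onD:
  assumes "johnson_panconnected_on S m" "u \<in> johnson_vertices_on S m" "v \<in> johnson_vertices_on S m"
    "u \<noteq> v" "card (u - v) \<le> l" "l < card (johnson_vertices_on S m)"
  obtains p where "is_path (johnson_vertices_on S m) (johnson_adj m) u v p" "length p = Suc l"
  using assms unfolding johnson_panconnected_on_def by blast

lemma johnson_path_from_subset_insert:
  assumes "finite S" "johnson_panconnected_on S m" "v \<in> johnson_vertices_on S m"
    "e \<in> S" "e \<notin> v" "b < card (johnson_vertices_on S m)"
  obtains x q where "x \<subseteq> insert e v" "x \<in> johnson_vertices_on S m" "length q = Suc b"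
    "is_path (johnson_vertices_on S m) (johnson_adj m) x v q"
proof (cases "b = 0")
  case True
  then show thesis
    using assms(3) by (intro that[of v "[v]"]) (auto intro: is_path_singleton)
next
  case False
  note v = johnson_vertices_onD[OF assms(1,3)]
  have "card (johnson_vertices_on S m) \<noteq> 1"
    using False assms(6) by linarith
  then have "m \<noteq> 0"
    by (metis assms(1) binomial_n_0 card_johnson_vertices_on)
  then obtain c where c: "c \<in> v"
    using v by fastforce
  define x where "x = insert e (v - {c})"
  have "x \<in> johnson_vertices_on S m"
    using v c assms(4,5) \<open>m \<noteq> 0\<close> by (auto simp: x_def johnson_vertices_on_def)
  moreover have "x - v = {e}"
    using assms(5) by (auto simp: x_def)
  then have "x \<noteq> v" "card (x - v) \<le> b"
    using False by auto
  ultimately obtain q where "is_path (johnson_vertices_on S m) (johnson_adj m) x v q" "length q = Suc b"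
    using johnson_panconnected_onD[OF assms(2) _ assms(3)] assms(6) by blast
  then show thesis
    using that[of x q] \<open>x \<in> johnson_vertices_on S m\<close> by (auto simp: x_def)
qed

lemma johnson_path_from_insert:
  assumes "finite S" "z \<notin> S" "johnson_panconnected_on S m" "v \<in> johnson_vertices_on S m"
    "e \<in> S" "e \<notin> v" "b < card (johnson_vertices_on S m)"
  obtains y q where "johnson_adj (Suc m) (insert e v) y" "\<forall>A\<in>set q. z \<in> A" "length q = Suc b"
    "is_path (johnson_vertices_on (insert z S) (Suc m)) (johnson_adj (Suc m)) y (insert z v) q"
proof -
  obtain x q where x: "x \<subseteq> insert e v" "x \<in> johnson_vertices_on S m" and
    q: "length q = Suc b" "is_path (johnson_vertices_on S m) (johnson_adj m) x v q"
    by (rule johnson_path_from_subset_insert[OF assms(1,3-7)])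
  have "z \<notin> insert e v"
    using assms(2,5) johnson_vertices_onD(2)[OF assms(1,4)] by blast
  with x(1) have "insert e v \<inter> insert z x = x"
    by blast
  then have "johnson_adj (Suc m) (insert e v) (insert z x)"
    using johnson_vertices_onD(3)[OF assms(1) x(2)] by (simp add: johnson_adj_def)
  then show thesis
    using is_path_map_insert[OF q(2) assms(1,2)] q(1) by (intro that) auto
qed

text \<open>In the application \<open>r\<close> is the order of the layer in which the path is continued after
  \<^term>\<open>insert e v\<close>, which must accommodate the remaining length \<open>k - a\<close>.\<close>

lemma johnson_path_to_insert:
  assumes "finite S" "johnson_panconnected_on S (Suc m)"
    "u \<in> johnson_vertices_on S (Suc m)" "v \<in> johnson_vertices_on S m"
    "card (u - v) \<le> Suc k" "Suc k < card (johnson_vertices_on S (Suc m)) + r" "0 < r"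
  obtains e a p where "e \<in> S" "e \<notin> v" "a \<le> k" "k - a < r" "length p = Suc a"
    "is_path (johnson_vertices_on S (Suc m)) (johnson_adj (Suc m)) u (insert e v) p"
proof -
  note result = that
  define N where "N = card (johnson_vertices_on S (Suc m))"
  note u = johnson_vertices_onD[OF assms(1,3)] and v = johnson_vertices_onD[OF assms(1,4)]
  have via_neighbour: thesis
    if e: "e \<in> S" "e \<notin> v" "u \<noteq> insert e v" "card (u - insert e v) \<le> min k (N - 1)" for e
  proof -
    have "0 < N"
      using assms(1,3) finite_johnson_vertices_on by (auto simp: N_def card_gt_0_iff)
    then have "min k (N - 1) < card (johnson_vertices_on S (Suc m))"
      by (simp add: N_def)
    then obtain p where "length p = Suc (min k (N - 1))"
      "is_path (johnson_vertices_on S (Suc m)) (johnson_adj (Suc m)) u (insert e v) p"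
      using johnson_panconnected_onD[OF assms(2,3) insert_in_johnson_vertices_on[OF assms(1,4) e(1,2)] e(3,4)]
      by blast
    moreover have "k - min k (N - 1) < r"
      using assms(6,7) by (auto simp: N_def)
    ultimately show thesis
      using e(1,2) by (intro result) auto
  qed
  obtain c where c: "c \<in> u" "c \<notin> v"
    using u v card_mono by (metis Suc_n_not_le_n subsetI)
  consider "u \<noteq> insert c v" | "u = insert c v" "k < r" | "u = insert c v" "r \<le> k"
    by linarith
  then show thesis
  proof cases
    case 1
    have "u - insert c v = (u - v) - {c}"
      by blast
    then have "card (u - insert c v) \<le> k"
      using assms(5) c u by auto
    moreover have "card (u - insert c v) < N"
      using card_Diff_less_card_johnson_vertices_on[OF assms(1,3)
          insert_in_johnson_vertices_on[OF assms(1,4)] 1] c u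
      by (auto simp: N_def)
    ultimately show thesis
      using c u 1 by (intro via_neighbour[of c]) auto
  next
    case 2
    then show thesis
      using c u is_path_singleton[OF assms(3)] by (intro result[of c 0 "[u]"]) auto
  next
    case 3
    then have "1 < N"
      using assms(6) by (auto simp: N_def)
    then obtain d where d: "d \<in> S" "d \<notin> u"
      using obtain_not_in_if_one_less_card_johnson_vertices_on[OF assms(1,3)] by (auto simp: N_def)
    have "u - insert d v \<subseteq> {c}"
      using 3 by blast
    then have "card (u - insert d v) \<le> 1"
      using card_mono[of "{c}"] by fastforce
    also have "1 \<le> min k (N - 1)"
      using 3 assms(7) \<open>1 < N\<close> by simp
    finally show thesis
      using d 3 by (intro via_neighbour[of d]) auto
  qed
qed

lemma johnson_path_through_insert:
  assumes "finite S" "z \<notin> S" "johnson_panconnected_on S (Suc m)" "johnson_panconnected_on S m"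
    "u \<in> johnson_vertices_on S (Suc m)" "v \<in> johnson_vertices_on S m"
    "card (u - v) \<le> l" "l < card (johnson_vertices_on (insert z S) (Suc m))"
  obtains p where "length p = Suc l"
    "is_path (johnson_vertices_on (insert z S) (Suc m)) (johnson_adj (Suc m)) u (insert z v) p"
proof -
  note u = johnson_vertices_onD[OF assms(1,5)] and v = johnson_vertices_onD[OF assms(1,6)]
  have "\<not> u \<subseteq> v"
    using card_mono[OF v(1), of u] u(3) v(3) by auto
  then have "0 < card (u - v)"
    using u by (simp add: card_gt_0_iff)
  then obtain k where l: "l = Suc k"
    using assms(7) by (cases l) auto
  have pos: "0 < card (johnson_vertices_on S m)"
    using assms(1,6) finite_johnson_vertices_on by (auto simp: card_gt_0_iff)
  have bound: "Suc k < card (johnson_vertices_on S (Suc m)) + card (johnson_vertices_on S m)"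
    using assms(1,2,8) l by (simp add: card_johnson_vertices_on_insert)
  have "card (u - v) \<le> Suc k"
    using assms(7) l by simp
  then obtain e a p where "e \<in> S" "e \<notin> v" "a \<le> k" "k - a < card (johnson_vertices_on S m)"
    "length p = Suc a" "is_path (johnson_vertices_on S (Suc m)) (johnson_adj (Suc m)) u (insert e v) p"
    by (rule johnson_path_to_insert[OF assms(1,3,5,6) _ bound pos])
  note e = this(1,2) and a = this(3,4) and p = this(5,6)
  obtain y q where y: "johnson_adj (Suc m) (insert e v) y" and q: "\<forall>A\<in>set q. z \<in> A"
    "length q = Suc (k - a)"
    "is_path (johnson_vertices_on (insert z S) (Suc m)) (johnson_adj (Suc m)) y (insert z v) q"
    using johnson_path_from_insert[OF assms(1,2,4,6) e a(2)] by blast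
  have "set p \<subseteq> johnson_vertices_on S (Suc m)"
    using p(2) unfolding is_path_def by blast
  then have "set p \<inter> set q = {}"
    using q(1) assms(2) johnson_vertices_onD(2)[OF assms(1)] by blast
  then have "is_path (johnson_vertices_on (insert z S) (Suc m)) (johnson_adj (Suc m)) u (insert z v) (p @ q)"
    by (rule is_path_append[OF is_path_mono[OF p(2) johnson_vertices_on_mono[OF subset_insertI]] q(3) y])
  moreover have "length (p @ q) = Suc l"
    using p(1) q(2) a(1) l by simp
  ultimately show thesis
    by (rule that[rotated])
qed

lemma johnson_panconnected_on_finite:
  "finite S \<Longrightarrow> johnson_panconnected_on S m"
proof (induction S arbitrary: m rule: finite_psubset_induct)
  case (psubset S m)
  show ?case
    unfolding johnson_panconnected_on_def
  proof (intro ballI allI impI, elim conjE)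
    fix u v l
    assume uv: "u \<in> johnson_vertices_on S m" "v \<in> johnson_vertices_on S m" "u \<noteq> v"
      and l: "card (u - v) \<le> l" "l < card (johnson_vertices_on S m)"
    note u = johnson_vertices_onD[OF psubset.hyps uv(1)]
      and v = johnson_vertices_onD[OF psubset.hyps uv(2)]
    obtain z where z: "z \<in> v" "z \<notin> u"
      using obtain_not_in_if_card_eq[OF u(1)] u(3) v(3) uv(3) by metis
    define S' where "S' = S - {z}"
    have S': "finite S'" "z \<notin> S'" "S = insert z S'" "S' \<subset> S"
      using psubset.hyps z(1) v(2) by (auto simp: S'_def)
    have "m \<noteq> 0"
      using z(1) v(1,3) by (auto simp: card_gt_0_iff)
    then obtain m' where m: "m = Suc m'"
      using not0_implies_Suc by blast
    have "u \<in> johnson_vertices_on S' (Suc m')" "v - {z} \<in> johnson_vertices_on S' m'"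
      using u v z m by (auto simp: S'_def johnson_vertices_on_def)
    moreover have "u - (v - {z}) = u - v"
      using z(2) by blast
    then have "card (u - (v - {z})) \<le> l"
      using l(1) by simp
    moreover have "l < card (johnson_vertices_on (insert z S') (Suc m'))"
      using l(2) S'(3) m by simp
    ultimately obtain p where "length p = Suc l"
      "is_path (johnson_vertices_on (insert z S') (Suc m')) (johnson_adj (Suc m')) u (insert z (v - {z})) p"
      by (rule johnson_path_through_insert[OF S'(1,2) psubset.IH[OF S'(4)] psubset.IH[OF S'(4)]])
    moreover have "insert z (v - {z}) = v"
      using z(1) by blast
    ultimately show "\<exists>p. is_path (johnson_vertices_on S m) (johnson_adj m) u v p \<and> length p = Suc l"
      using S'(3) m by auto
  qed
qed

theorem theorem3p6:
  fixes n m :: nat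
  assumes "n \<ge> 3" and "1 \<le> m" and "2 * m \<le> n"
  shows "panconnected (johnson_vertices n m) (johnson_adj m)"
proof -
  let ?V = "johnson_vertices_on {1..n} m"
  have "n \<le> card ?V"
    using assms upper_le_binomial[of m n] by (simp add: card_johnson_vertices_on)
  then have order: "2 < card ?V"
    using assms(1) by simp
  show ?thesis
    unfolding panconnected_def johnson_vertices_eq
  proof (intro conjI ballI allI impI finite_johnson_vertices_on finite_atLeastAtMost order, elim conjE)
    fix u v l
    assume uv: "u \<in> ?V" "v \<in> ?V" "u \<noteq> v"
      and l: "graph_dist ?V (johnson_adj m) u v \<le> enat l" "l \<le> card ?V - 1"
    have "card (u - v) \<le> l"
      using order_trans[OF card_Diff_le_graph_dist[OF finite_atLeastAtMost] l(1)] by simp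
    moreover have "l < card ?V"
      using l(2) order by simp
    ultimately obtain p where "is_path ?V (johnson_adj m) u v p" "length p = Suc l"
      by (rule johnson_panconnected_onD[OF johnson_panconnected_on_finite[OF finite_atLeastAtMost] uv])
    then show "\<exists>p. is_path ?V (johnson_adj m) u v p \<and> length p - 1 = l"
      by auto
  qed
qed

end
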